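(* Let $n\ge2$ and, for $\mathbf w,\mathbf w'\in\mathcal{W}^n$ and $1\le j\le n-1$, let $\mathscr M_j(\mathbf w,\mathbf w')$ be the probability that a single Moran event transforms $\mathbf w$ into $\mathbf w'$ and that the dying leaf $u$ is a child of the internal node of rank $j$ in $\mathbf w$. Then $\mathscr M(\mathbf w,\mathbf w')=\sum_{j=1}^{n-1}\mathscr M_j(\mathbf w,\mathbf w')$, and for all $\mathbf w,\mathbf w'\in\mathcal W^n$ and $j$, \[ \sum_{\mathbf w\in\mathcal W^n}\mathscr M_j(\mathbf w,\mathbf w')=\frac{j}{\binom n2},\qquad \sum_{\mathbf w'\in\mathcal W^n}\mathscr M_j(\mathbf w,\mathbf w')=\frac{B_j(\mathbf w)}{n}, \] where $B_j(\mathbf w)$ is the number of leaves among the two children of the rank-$j$ internal node of $\mathbf w$.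
   Context: $\mathcal W^n$ is the set of ranked leaf-labelled rooted binary tree topologies with leaves $\{1,\dots,n\}$: binary trees with $n-1$ internal nodes totally ordered by rank $1,\dots,n-1$ (rank 1 is the root; each internal node has larger rank than its parent). A Moran event on $\mathbf w\in\mathcal W^n$: an ordered pair $(u,v)$ of distinct leaves is chosen uniformly at random among the $n(n-1)$ ordered pairs; leaf $u$ and its parent internal node are removed (the sibling of $u$ is reattached to the parent of the removed node, ranks of later nodes shifting down by one), and then a new internal node of rank $n-1$ is inserted on the edge above leaf $v$, with children $u$ and $v$. $\mathscr M(\mathbf w,\mathbf w')$ is the probability that a Moran event transforms $\mathbf w$ into $\mathbf w'$. *)

theory Defs
  imports Complex_Main
begin

text \<open>Nodes of a ranked tree: leaves labelled by naturals, internal nodes by their rank.\<close>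
datatype node = L nat | I nat

text \<open>A ranked tree topology is encoded by its parent map: p x is the rank of the parent
  of node x; the root (internal node of rank 1) and all non-nodes get the value 0.\<close>
type_synonym rtree = "node \<Rightarrow> nat"

definition nodes :: "nat \<Rightarrow> node set" where
  "nodes n = L ` {1..n} \<union> I ` {1..n-1}"

definition W :: "nat \<Rightarrow> rtree set" where
  "W n = {p. (\<forall>i\<in>{1..n}. 1 \<le> p (L i) \<and> p (L i) \<le> n - 1)
           \<and> (\<forall>k\<in>{2..n-1}. 1 \<le> p (I k) \<and> p (I k) < k)
           \<and> (\<forall>k\<in>{1..n-1}. card {x \<in> nodes n. p x = k} = 2)
           \<and> (\<forall>x. x \<notin> nodes n - {I 1} \<longrightarrow> p x = 0)}"

text \<open>Moran event with dying leaf u and reproducing leaf v on the tree p with n leaves.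
  a = parent of u (removed); its other child gets the parent of a; ranks above a shift
  down by one; finally a new node of rank n-1 is put on the edge above v with children u, v.\<close>
definition moran :: "nat \<Rightarrow> rtree \<Rightarrow> nat \<Rightarrow> nat \<Rightarrow> rtree" where
  "moran n p u v =
    (let a = p (L u);
         p2 = (\<lambda>x. if p x = a \<and> x \<noteq> L u then p (I a) else p x);
         sh = (\<lambda>r. if r > a then r - 1 else r);
         ush = (\<lambda>k. if k < a then k else k + 1);
         q = (\<lambda>x. case x of L i \<Rightarrow> sh (p2 (L i)) | I k \<Rightarrow> sh (p2 (I (ush k))))
     in (\<lambda>x. if x = L u \<or> x = L v then n - 1
            else if x = I (n - 1) then q (L v)
            else q x))"

definition moran_pairs :: "nat \<Rightarrow> (nat \<times> nat) set" where
  "moran_pairs n = {(u, v). u \<in> {1..n} \<and> v \<in> {1..n} \<and> u \<noteq> v}"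

definition Mor :: "nat \<Rightarrow> rtree \<Rightarrow> rtree \<Rightarrow> real" where
  "Mor n w w' = real (card {(u, v) \<in> moran_pairs n. moran n w u v = w'}) / real (n * (n - 1))"

definition Mor_j :: "nat \<Rightarrow> nat \<Rightarrow> rtree \<Rightarrow> rtree \<Rightarrow> real" where
  "Mor_j n j w w' = real (card {(u, v) \<in> moran_pairs n. moran n w u v = w' \<and> w (L u) = j})
                     / real (n * (n - 1))"

definition B :: "nat \<Rightarrow> nat \<Rightarrow> rtree \<Rightarrow> nat" where
  "B n j w = card {i \<in> {1..n}. w (L i) = j}"

end

theory Submission
  imports Defs
begin

text \<open>Trees of \<open>\<W>\<^sup>n\<close> are treated as ranked trees on an arbitrary leaf set S with m internal
  nodes. Deleting a leaf u together with its parent, of rank a, and closing the gap in the ranks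
  gives a ranked tree on S - {u}; the original tree is recovered by inserting u, via a new node of
  rank a, on the edge above the sibling of u, an edge spanning level a. A Moran event (u, v) is
  the deletion of u followed by the insertion of u on the edge above leaf v at the top level
  n - 1. Hence it preserves \<open>\<W>\<^sup>n\<close>, and it maps w to w' iff u and v are the children of
  the top node of w' and w, w' agree after deleting u. So the preimages w with parent rank j of
  u correspond to the edges of the reduced tree spanning level j, and there are exactly j of
  them: 2j - 1 nodes have parent rank below j, and j - 1 of these are internal nodes of rank
  below j. Counting ordered pairs (u, v) gives 2j / (n(n - 1)) for the sum over w, and
  \<open>B\<^sub>j(w)(n - 1) / (n(n - 1))\<close> for the sum over w'.\<close>

definition tree_nodes :: "nat set \<Rightarrow> nat \<Rightarrow> node set" where
  "tree_nodes S m = L ` S \<union> I ` {1..m}"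

definition ranked_tree :: "nat set \<Rightarrow> nat \<Rightarrow> rtree \<Rightarrow> bool" where
  "ranked_tree S m p \<longleftrightarrow>
     (\<forall>i\<in>S. 1 \<le> p (L i) \<and> p (L i) \<le> m)
   \<and> (\<forall>k\<in>{2..m}. 1 \<le> p (I k) \<and> p (I k) < k)
   \<and> (\<forall>k\<in>{1..m}. card {x \<in> tree_nodes S m. p x = k} = 2)
   \<and> (\<forall>x. x \<notin> tree_nodes S m - {I 1} \<longrightarrow> p x = 0)"

lemma nodes_eq_tree_nodes: "nodes n = tree_nodes {1..n} (n - 1)"
  by (simp add: nodes_def tree_nodes_def)

lemma mem_W_iff: "p \<in> W n \<longleftrightarrow> ranked_tree {1..n} (n - 1) p"
  unfolding W_def ranked_tree_def nodes_eq_tree_nodes by (rule mem_Collect_eq)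

lemma mem_tree_nodes [simp]:
  "L i \<in> tree_nodes S m \<longleftrightarrow> i \<in> S"
  "I k \<in> tree_nodes S m \<longleftrightarrow> 1 \<le> k \<and> k \<le> m"
  by (auto simp: tree_nodes_def)

lemma finite_tree_nodes: "finite S \<Longrightarrow> finite (tree_nodes S m)"
  by (simp add: tree_nodes_def)

context
  fixes S m p
  assumes tree: "ranked_tree S m p"
begin

lemma ranked_tree_leaf: "i \<in> S \<Longrightarrow> 1 \<le> p (L i) \<and> p (L i) \<le> m"
  using tree by (simp add: ranked_tree_def)

lemma ranked_tree_internal: "2 \<le> k \<Longrightarrow> k \<le> m \<Longrightarrow> 1 \<le> p (I k) \<and> p (I k) < k"
  using tree by (simp add: ranked_tree_def)

lemma ranked_tree_card_children: "1 \<le> k \<Longrightarrow> k \<le> m \<Longrightarrow> card {x \<in> tree_nodes S m. p x = k} = 2"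
  using tree by (simp add: ranked_tree_def)

lemma ranked_tree_outside: "x \<notin> tree_nodes S m - {I 1} \<Longrightarrow> p x = 0"
  using tree by (simp add: ranked_tree_def)

lemma ranked_tree_root [simp]: "p (I 1) = 0"
  by (rule ranked_tree_outside) simp

lemma ranked_tree_internal_less: "1 \<le> k \<Longrightarrow> p (I k) < k"
  using ranked_tree_internal[of k] ranked_tree_outside[of "I k"] by fastforce

lemma ranked_tree_le: "p x \<le> m"
proof (cases x)
  case (L i)
  then show ?thesis using ranked_tree_leaf[of i] ranked_tree_outside[of x] by fastforce
next
  case (I k)
  then show ?thesis using ranked_tree_internal_less[of k] ranked_tree_outside[of x] by fastforce
qed

lemma ranked_tree_eq_0_iff:
  assumes "x \<in> tree_nodes S m"
  shows "p x = 0 \<longleftrightarrow> x = I 1"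
proof (cases x)
  case (L i)
  then show ?thesis using assms ranked_tree_leaf[of i] by auto
next
  case (I k)
  then have "k = 1 \<or> 2 \<le> k \<and> k \<le> m" using assms by auto
  then show ?thesis using I ranked_tree_internal[of k] ranked_tree_root by auto
qed

lemma ranked_tree_children:
  assumes "1 \<le> k" "y \<in> tree_nodes S m" "z \<in> tree_nodes S m" "y \<noteq> z" "p y = k" "p z = k"
  shows "p x = k \<longleftrightarrow> x = y \<or> x = z"
proof
  assume px: "p x = k"
  show "x = y \<or> x = z"
  proof (rule ccontr)
    assume "\<not> (x = y \<or> x = z)"
    then have three: "card {x, y, z} = 3" using assms(4) by simp
    have "k \<le> m" using ranked_tree_le[of y] assms(5) by simp
    then have two: "card {x \<in> tree_nodes S m. p x = k} = 2"
      using ranked_tree_card_children assms(1) by blast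
    have "x \<in> tree_nodes S m" using ranked_tree_outside[of x] px assms(1) by fastforce
    then have "{x, y, z} \<subseteq> {x \<in> tree_nodes S m. p x = k}" using assms px by auto
    then have "card {x, y, z} \<le> 2"
      using two card_mono[of "{x \<in> tree_nodes S m. p x = k}"] by (simp add: card_ge_0_finite)
    then show False using three by simp
  qed
qed (use assms in auto)

end

definition lift_rank :: "nat \<Rightarrow> nat \<Rightarrow> nat" where
  "lift_rank a k = (if k < a then k else Suc k)"

definition drop_rank :: "nat \<Rightarrow> nat \<Rightarrow> nat" where
  "drop_rank a k = (if a < k then k - 1 else k)"

definition lift_node :: "nat \<Rightarrow> node \<Rightarrow> node" where
  "lift_node a x = (case x of L i \<Rightarrow> L i | I k \<Rightarrow> I (lift_rank a k))"

definition drop_node :: "nat \<Rightarrow> node \<Rightarrow> node" where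
  "drop_node a x = (case x of L i \<Rightarrow> L i | I k \<Rightarrow> I (drop_rank a k))"

lemma drop_lift_rank [simp]: "drop_rank a (lift_rank a k) = k"
  by (simp add: drop_rank_def lift_rank_def)

lemma lift_drop_rank: "k \<noteq> a \<Longrightarrow> lift_rank a (drop_rank a k) = k"
  by (auto simp: drop_rank_def lift_rank_def)

lemma lift_rank_neq [simp]: "lift_rank a k \<noteq> a" "a \<noteq> lift_rank a k"
  by (simp_all add: lift_rank_def)

lemma lift_rank_inject [simp]: "lift_rank a k = lift_rank a l \<longleftrightarrow> k = l"
  by (auto simp: lift_rank_def)

lemma lift_node_simps [simp]:
  "lift_node a (L i) = L i" "lift_node a (I k) = I (lift_rank a k)"
  by (simp_all add: lift_node_def)

lemma drop_node_simps [simp]: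
  "drop_node a (L i) = L i" "drop_node a (I k) = I (drop_rank a k)"
  by (simp_all add: drop_node_def)

lemma lift_node_inject [simp]: "lift_node a x = lift_node a y \<longleftrightarrow> x = y"
  by (cases x; cases y) auto

lemma lift_node_neq [simp]: "lift_node a x \<noteq> I a" "I a \<noteq> lift_node a x"
  by (cases x; simp)+

lemma lift_node_eq_L_iff [simp]: "lift_node a x = L i \<longleftrightarrow> x = L i" "L i = lift_node a x \<longleftrightarrow> x = L i"
  by (cases x; auto)+

lemma drop_lift_node [simp]: "drop_node a (lift_node a x) = x"
  by (cases x) auto

lemma lift_drop_node: "x \<noteq> I a \<Longrightarrow> lift_node a (drop_node a x) = x"
  by (cases x) (auto simp: lift_drop_rank)

text \<open>Deleting leaf u also deletes its parent, of rank a; the sibling of u is reattached to the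
  parent of that node, and the ranks above a close up.\<close>
definition remove_leaf :: "rtree \<Rightarrow> nat \<Rightarrow> rtree" where
  "remove_leaf p u x =
     (let a = p (L u); y = lift_node a x
      in if x = L u then 0 else drop_rank a (if p y = a then p (I a) else p y))"

text \<open>The inverse operation: a new internal node of rank a, with children the new leaf u and y,
  is put on the edge above y; ranks from a on move up by one.\<close>
definition insert_leaf :: "rtree \<Rightarrow> node \<Rightarrow> nat \<Rightarrow> nat \<Rightarrow> rtree" where
  "insert_leaf r y a u x =
     (if x = L u \<or> x = lift_node a y then a
      else if x = I a then r y
      else lift_rank a (r (drop_node a x)))"

text \<open>The edge above y crosses level a, so a new node of rank a can be put on it.\<close>
definition edge_spans :: "rtree \<Rightarrow> nat \<Rightarrow> node \<Rightarrow> bool" where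
  "edge_spans r a y \<longleftrightarrow> r y < a \<and> (\<forall>k. y = I k \<longrightarrow> a \<le> k)"

text \<open>The node of insert_leaf r y a u that takes over the parent of x: the new node if x = y.\<close>
definition embed_node :: "node \<Rightarrow> nat \<Rightarrow> node \<Rightarrow> node" where
  "embed_node y a x = (if x = y then I a else lift_node a x)"

lemma moran_eq_remove_leaf:
  assumes "u \<noteq> v"
  shows "moran n p u v x =
    (if x = L u \<or> x = L v then n - 1
     else if x = I (n - 1) then remove_leaf p u (L v) else remove_leaf p u x)"
  using assms unfolding moran_def remove_leaf_def lift_node_def lift_rank_def drop_rank_def Let_def
  by (auto split: node.split)

lemma insert_leaf_eq_iff:
  assumes "r y < a"
  shows "insert_leaf r y a u x = a \<longleftrightarrow> x = L u \<or> x = lift_node a y"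
  using assms by (auto simp: insert_leaf_def)

lemma remove_insert_leaf:
  assumes "r y < a" "y \<noteq> L u" "r (L u) = 0"
  shows "remove_leaf (insert_leaf r y a u) u = r"
proof
  fix x
  let ?X = "insert_leaf r y a u"
  have Lu: "?X (L u) = a" by (simp add: insert_leaf_def)
  show "remove_leaf ?X u x = r x"
  proof (cases "x = L u \<or> x = y")
    case True
    moreover have "?X (I a) = r y" "?X (lift_node a y) = a"
      using assms(2) by (simp_all add: insert_leaf_def)
    ultimately show ?thesis using assms Lu by (auto simp: remove_leaf_def Let_def drop_rank_def)
  next
    case False
    then have "?X (lift_node a x) = lift_rank a (r x)" by (simp add: insert_leaf_def)
    then show ?thesis using False Lu by (simp add: remove_leaf_def)
  qed
qed

context
  fixes S m y a u
  assumes u: "u \<notin> S" and a: "1 \<le> a" "a \<le> Suc m" and y: "y \<in> tree_nodes S m"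
begin

lemma lift_node_mem_tree_nodes: "x \<in> tree_nodes S m \<Longrightarrow> lift_node a x \<in> tree_nodes (insert u S) (Suc m)"
  by (cases x) (auto simp: lift_rank_def)

lemma bij_betw_embed_node:
  "bij_betw (embed_node y a) (tree_nodes S m) (tree_nodes (insert u S) (Suc m) - {L u, lift_node a y})"
proof (rule bij_betw_imageI)
  show "inj_on (embed_node y a) (tree_nodes S m)"
    by (rule inj_onI) (auto simp: embed_node_def split: if_splits)
  have "embed_node y a x \<in> tree_nodes (insert u S) (Suc m) - {L u, lift_node a y}"
    if "x \<in> tree_nodes S m" for x
    using that u a lift_node_mem_tree_nodes[OF that] by (auto simp: embed_node_def)
  moreover have "z \<in> embed_node y a ` tree_nodes S m"
    if "z \<in> tree_nodes (insert u S) (Suc m) - {L u, lift_node a y}" for z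
  proof (cases "z = I a")
    case True
    then show ?thesis using y by (auto simp: embed_node_def)
  next
    case False
    have "drop_node a z \<in> tree_nodes S m" using that False a
      by (cases z) (auto simp: drop_rank_def)
    moreover have "drop_node a z \<noteq> y" using that lift_drop_node[OF False] by auto
    ultimately show ?thesis using lift_drop_node[OF False]
      by (metis embed_node_def image_eqI)
  qed
  ultimately show "embed_node y a ` tree_nodes S m = tree_nodes (insert u S) (Suc m) - {L u, lift_node a y}"
    by (intro equalityI image_subsetI subsetI)
qed

lemma insert_leaf_embed_node:
  assumes "r y < a" "x \<in> tree_nodes S m"
  shows "insert_leaf r y a u (embed_node y a x) = lift_rank a (r x)"
  using assms u by (auto simp: insert_leaf_def embed_node_def lift_rank_def)

lemma card_children_insert_leaf:
  assumes "r y < a"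
  shows "card {x \<in> tree_nodes (insert u S) (Suc m). insert_leaf r y a u x = lift_rank a k}
       = card {x \<in> tree_nodes S m. r x = k}"
proof -
  have image: "embed_node y a ` tree_nodes S m = tree_nodes (insert u S) (Suc m) - {L u, lift_node a y}"
    using bij_betw_embed_node by (simp add: bij_betw_def)
  have "{x \<in> tree_nodes (insert u S) (Suc m). insert_leaf r y a u x = lift_rank a k}
      = embed_node y a ` {x \<in> tree_nodes S m. r x = k}"
  proof (intro equalityI subsetI)
    fix x assume x: "x \<in> {x \<in> tree_nodes (insert u S) (Suc m). insert_leaf r y a u x = lift_rank a k}"
    moreover have "insert_leaf r y a u z = a" if "z \<in> {L u, lift_node a y}" for z
      using that by (auto simp: insert_leaf_def)
    ultimately have "x \<notin> {L u, lift_node a y}" by auto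
    then obtain x' where "x' \<in> tree_nodes S m" "x = embed_node y a x'" using x image by blast
    then show "x \<in> embed_node y a ` {x \<in> tree_nodes S m. r x = k}"
      using x insert_leaf_embed_node[of r, OF assms] by auto
  next
    fix x assume "x \<in> embed_node y a ` {x \<in> tree_nodes S m. r x = k}"
    then show "x \<in> {x \<in> tree_nodes (insert u S) (Suc m). insert_leaf r y a u x = lift_rank a k}"
      using image insert_leaf_embed_node[of r, OF assms] by blast
  qed
  moreover have "inj_on (embed_node y a) {x \<in> tree_nodes S m. r x = k}"
    using bij_betw_embed_node by (auto simp: bij_betw_def intro: inj_on_subset)
  ultimately show ?thesis by (simp add: card_image)
qed

end

context
  fixes S m r y a u
  assumes tree: "ranked_tree S m r" and u: "u \<notin> S" and a: "1 \<le> a" "a \<le> Suc m"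
    and y: "y \<in> tree_nodes S m" "edge_spans r a y"
begin

private abbreviation (input) "X \<equiv> insert_leaf r y a u"

private lemma below: "r y < a" and above: "y = I k \<Longrightarrow> a \<le> k"
  using y(2) by (auto simp: edge_spans_def)

private lemma lifted_y:
  "lift_node a y \<in> tree_nodes (insert u S) (Suc m) \<and> lift_node a y \<noteq> L u \<and> lift_node a y \<noteq> I 1"
proof (cases y)
  case (L i)
  then show ?thesis using y(1) u by auto
next
  case (I k)
  then have "a \<le> k" "k \<le> m" using above y(1) by auto
  then show ?thesis using I a by (simp add: lift_rank_def)
qed

private lemma insert_leaf_other:
  "x \<noteq> L u \<Longrightarrow> x \<noteq> lift_node a y \<Longrightarrow> x \<noteq> I a \<Longrightarrow> X x = lift_rank a (r (drop_node a x))"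
  by (simp add: insert_leaf_def)

private lemma inserted_leaf_parent: "i \<in> insert u S \<Longrightarrow> 1 \<le> X (L i) \<and> X (L i) \<le> Suc m"
  using a ranked_tree_leaf[OF tree, of i] by (auto simp: insert_leaf_def lift_rank_def)

private lemma inserted_internal_parent:
  assumes k: "2 \<le> k" "k \<le> Suc m"
  shows "1 \<le> X (I k) \<and> X (I k) < k"
proof (cases "k = a \<or> I k = lift_node a y")
  case True
  have "y \<noteq> I 1" if "k = a" using that k above[of 1] by auto
  then have "1 \<le> r y" if "k = a" using that ranked_tree_eq_0_iff[OF tree y(1)] by auto
  moreover have "a < k" if "I k = lift_node a y"
    using that above by (cases y) (auto simp: lift_rank_def)
  ultimately show ?thesis using True a below by (auto simp: insert_leaf_def)
next
  case False
  then have X: "X (I k) = lift_rank a (r (I (drop_rank a k)))" by (auto simp: insert_leaf_def)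
  have "drop_rank a k \<noteq> 1"
  proof
    assume "drop_rank a k = 1"
    then have "a = 1" "k = 2" using False k a by (auto simp: drop_rank_def split: if_splits)
    then have "y = I 1" using below ranked_tree_eq_0_iff[OF tree y(1)] by simp
    then show False using False \<open>a = 1\<close> \<open>k = 2\<close> by (simp add: lift_rank_def)
  qed
  moreover have "2 \<le> drop_rank a k" "drop_rank a k \<le> m"
    using k a False calculation by (auto simp: drop_rank_def)
  ultimately have "1 \<le> r (I (drop_rank a k))" "r (I (drop_rank a k)) < drop_rank a k"
    using ranked_tree_internal[OF tree, of "drop_rank a k"] by auto
  moreover have "lift_rank a j < k" if "j < drop_rank a k" for j
    using that False by (auto simp: lift_rank_def drop_rank_def split: if_splits)
  ultimately show ?thesis using X by (simp add: lift_rank_def)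
qed

private lemma inserted_card_children:
  assumes k: "1 \<le> k" "k \<le> Suc m"
  shows "card {x \<in> tree_nodes (insert u S) (Suc m). X x = k} = 2"
proof (cases "k = a")
  case True
  then have "{x \<in> tree_nodes (insert u S) (Suc m). X x = k} = {L u, lift_node a y}"
    using insert_leaf_eq_iff[of r y a u, OF below] lifted_y by auto
  then show ?thesis using lifted_y by simp
next
  case False
  then have "drop_rank a k \<in> {1..m}" using k a by (auto simp: drop_rank_def)
  then show ?thesis
    using card_children_insert_leaf[where r = r and k = "drop_rank a k", OF u a y(1) below]
      ranked_tree_card_children[OF tree] lift_drop_rank[OF False] by simp
qed

private lemma inserted_outside:
  assumes x: "x \<notin> tree_nodes (insert u S) (Suc m) - {I 1}"
  shows "X x = 0"
proof (cases "x = I a")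
  case True
  then show ?thesis using x a below by (auto simp: insert_leaf_def)
next
  case False
  have "drop_node a x \<notin> tree_nodes S m - {I 1}"
    using x False a by (cases x) (auto simp: drop_rank_def)
  then have "r (drop_node a x) = 0" by (rule ranked_tree_outside[OF tree])
  moreover have "x \<noteq> L u" "x \<noteq> lift_node a y" using x lifted_y by auto
  ultimately have "X x = lift_rank a (r (drop_node a x))" using insert_leaf_other False by blast
  with \<open>r (drop_node a x) = 0\<close> show ?thesis using a by (simp add: lift_rank_def)
qed

lemma ranked_tree_insert_leaf: "ranked_tree (insert u S) (Suc m) (insert_leaf r y a u)"
  unfolding ranked_tree_def
  by (intro conjI ballI allI impI inserted_leaf_parent inserted_internal_parent
      inserted_card_children inserted_outside) auto

end

definition sibling :: "rtree \<Rightarrow> node \<Rightarrow> node" where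
  "sibling p x = (THE s. s \<noteq> x \<and> p s = p x)"

lemma ranked_tree_sibling:
  assumes tree: "ranked_tree S m p" and x: "x \<in> tree_nodes S m" "x \<noteq> I 1"
  shows "sibling p x \<in> tree_nodes S m" "sibling p x \<noteq> x" "p (sibling p x) = p x"
    and "p z = p x \<longleftrightarrow> z = x \<or> z = sibling p x"
proof -
  let ?C = "{z \<in> tree_nodes S m. p z = p x}"
  have pos: "1 \<le> p x" using ranked_tree_eq_0_iff[OF tree x(1)] x(2) by simp
  then have "card ?C = 2" using ranked_tree_card_children[OF tree] ranked_tree_le[OF tree] by blast
  then obtain s where s: "s \<in> tree_nodes S m" "s \<noteq> x" "p s = p x"
    using x(1) by (auto simp: card_2_iff)
  have iff: "p z = p x \<longleftrightarrow> z = x \<or> z = s" for z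
    using ranked_tree_children[OF tree pos x(1) s(1) s(2)[symmetric] refl s(3)] .
  then have "sibling p x = s" unfolding sibling_def using s(2) by blast
  then show "sibling p x \<in> tree_nodes S m" "sibling p x \<noteq> x" "p (sibling p x) = p x"
    and "p z = p x \<longleftrightarrow> z = x \<or> z = sibling p x"
    using s iff by auto
qed

context
  fixes S m p u
  assumes tree: "ranked_tree S (Suc m) p" and m: "1 \<le> m" and u: "u \<in> S"
begin

private abbreviation (input) "a \<equiv> p (L u)"
private abbreviation (input) "s \<equiv> sibling p (L u)"

private lemma leaf_rank: "1 \<le> a" "a \<le> Suc m"
  using ranked_tree_leaf[OF tree u] by auto

private lemma sibling_facts: "s \<in> tree_nodes S (Suc m)" "s \<noteq> L u" "p s = a"
  and eq_a_iff: "p x = a \<longleftrightarrow> x = L u \<or> x = s"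
  using ranked_tree_sibling[OF tree, of "L u"] u by auto

private lemma parent_less: "p (I a) < a"
  using ranked_tree_internal_less[OF tree] leaf_rank by blast

private lemma sibling_internal: "s = I k \<Longrightarrow> a < k"
  using sibling_facts ranked_tree_internal[OF tree, of k] ranked_tree_root[OF tree] leaf_rank
  by (cases "k = 1") auto

private lemma root_child: "a = 1 \<Longrightarrow> s = I 2"
  using eq_a_iff[of "I 2"] ranked_tree_internal[OF tree, of 2] m by auto

private lemma sibling_ne: "s \<noteq> I a"
  using sibling_facts(3) parent_less by auto

private lemma remove_leaf_apply:
  "x \<noteq> L u \<Longrightarrow> remove_leaf p u x = drop_rank a (if lift_node a x = s then p (I a) else p (lift_node a x))"
  using eq_a_iff[of "lift_node a x"] by (auto simp: remove_leaf_def Let_def)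

private lemma lift_drop_sibling: "lift_node a (drop_node a s) = s"
  using lift_drop_node[OF sibling_ne] .

private lemma remove_leaf_at_sibling: "remove_leaf p u (drop_node a s) = p (I a)"
proof -
  have "drop_node a s \<noteq> L u" using sibling_facts(2) lift_drop_sibling by force
  then show ?thesis using remove_leaf_apply lift_drop_sibling parent_less
    by (simp add: drop_rank_def)
qed

lemma edge_spans_sibling:
  "drop_node a s \<in> tree_nodes (S - {u}) m \<and> edge_spans (remove_leaf p u) a (drop_node a s)"
proof (cases s)
  case (L i)
  then show ?thesis
    using sibling_facts remove_leaf_at_sibling parent_less by (auto simp: edge_spans_def)
next
  case (I k)
  then have "a < k" "k \<le> Suc m" using sibling_internal sibling_facts(1) by auto
  then show ?thesis
    using I leaf_rank remove_leaf_at_sibling parent_less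
      by (auto simp: edge_spans_def drop_rank_def)
qed

lemma insert_remove_leaf: "insert_leaf (remove_leaf p u) (drop_node a s) a u = p"
proof
  fix x
  show "insert_leaf (remove_leaf p u) (drop_node a s) a u x = p x"
  proof (cases "x = L u \<or> x = s \<or> x = I a")
    case True
    then show ?thesis
      using sibling_facts sibling_ne lift_drop_sibling remove_leaf_at_sibling
      by (auto simp: insert_leaf_def)
  next
    case False
    then have "drop_node a x \<noteq> L u" "lift_node a (drop_node a x) = x"
      using lift_drop_node[of x a] by auto
    then have "remove_leaf p u (drop_node a x) = drop_rank a (p x)"
      using remove_leaf_apply False by simp
    moreover have "p x \<noteq> a" using eq_a_iff False by simp
    ultimately show ?thesis using False lift_drop_sibling
      by (simp add: insert_leaf_def lift_drop_rank)
  qed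
qed

private lemma drop_rank_bounds: "1 \<le> k \<Longrightarrow> k \<le> Suc m \<Longrightarrow> k \<noteq> a \<Longrightarrow> 1 \<le> drop_rank a k \<and> drop_rank a k \<le> m"
  using leaf_rank by (auto simp: drop_rank_def)

private lemma sibling_parent_bounds: "a \<noteq> 1 \<Longrightarrow> 1 \<le> p (I a) \<and> p (I a) < a"
  using ranked_tree_internal[OF tree, of a] leaf_rank by auto

private lemma removed_leaf_parent:
  assumes i: "i \<in> S - {u}"
  shows "1 \<le> remove_leaf p u (L i) \<and> remove_leaf p u (L i) \<le> m"
proof (cases "L i = s")
  case True
  then have "a \<noteq> 1" using root_child by auto
  moreover have "remove_leaf p u (L i) = p (I a)"
    using remove_leaf_at_sibling True by (metis drop_node_simps(1))
  ultimately show ?thesis using sibling_parent_bounds leaf_rank by simp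
next
  case False
  then have "p (L i) \<noteq> a" using eq_a_iff i by auto
  then show ?thesis using False i remove_leaf_apply[of "L i"] drop_rank_bounds
      ranked_tree_leaf[OF tree, of i] by simp
qed

private lemma removed_internal_parent:
  assumes k: "2 \<le> k" "k \<le> m"
  shows "1 \<le> remove_leaf p u (I k) \<and> remove_leaf p u (I k) < k"
proof -
  define K where "K = lift_rank a k"
  have K: "2 \<le> K" "K \<le> Suc m" using k leaf_rank by (auto simp: K_def lift_rank_def)
  have r: "remove_leaf p u (I k) = drop_rank a (if I K = s then p (I a) else p (I K))"
    using remove_leaf_apply[of "I k"] by (simp add: K_def)
  show ?thesis
  proof (cases "I K = s")
    case True
    then have "a < K" using sibling_internal by simp
    then have "a \<le> k" by (auto simp: K_def lift_rank_def split: if_splits)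
    moreover have "a \<noteq> 1" using root_child True k by (auto simp: K_def lift_rank_def)
    ultimately show ?thesis using True r sibling_parent_bounds by (simp add: drop_rank_def)
  next
    case False
    then have "p (I K) \<noteq> a" using eq_a_iff by auto
    moreover have "1 \<le> p (I K)" "p (I K) < K" using ranked_tree_internal[OF tree] K by auto
    ultimately show ?thesis using False r leaf_rank
      by (auto simp: K_def lift_rank_def drop_rank_def)
  qed
qed

private lemma removed_card_children:
  assumes k: "1 \<le> k" "k \<le> m"
  shows "card {x \<in> tree_nodes (S - {u}) m. remove_leaf p u x = k} = 2"
proof -
  \<comment> \<open>p is recovered from remove_leaf p u by insert_leaf, which transports child counts\<close>
  have "u \<notin> S - {u}" "insert u (S - {u}) = S" using u by auto
  then have "card {x \<in> tree_nodes (S - {u}) m. remove_leaf p u x = k}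
      = card {x \<in> tree_nodes S (Suc m). p x = lift_rank a k}"
    using card_children_insert_leaf[where r = "remove_leaf p u", of u "S - {u}" a m "drop_node a s" k]
      leaf_rank edge_spans_sibling insert_remove_leaf by (simp add: edge_spans_def)
  also have "\<dots> = 2"
    using ranked_tree_card_children[OF tree, of "lift_rank a k"] k by (simp add: lift_rank_def)
  finally show ?thesis .
qed

private lemma removed_outside:
  assumes x: "x \<notin> tree_nodes (S - {u}) m - {I 1}"
  shows "remove_leaf p u x = 0"
proof (cases "x = L u")
  case True
  then show ?thesis by (simp add: remove_leaf_def)
next
  case False
  show ?thesis
  proof (cases "lift_node a x = s")
    case True
    then have "x = drop_node a s" using drop_lift_node[of a x] by simp
    then have "x = I 1" using x edge_spans_sibling by blast
    then have "a = 1" using edge_spans_sibling leaf_rank \<open>x = drop_node a s\<close>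
      by (simp add: edge_spans_def)
    then show ?thesis
      using True False remove_leaf_apply ranked_tree_root[OF tree] by (simp add: drop_rank_def)
  next
    case lift_ne: False
    have "lift_node a x \<notin> tree_nodes S (Suc m) - {I 1}"
    proof (cases x)
      case (L i)
      then show ?thesis using x False by simp
    next
      case (I k)
      have "k \<noteq> 1" if "a = 1" using that lift_ne root_child I by (auto simp: lift_rank_def)
      then show ?thesis using I x leaf_rank by (simp add: lift_rank_def) presburger
    qed
    then have "p (lift_node a x) = 0" by (rule ranked_tree_outside[OF tree])
    then show ?thesis using lift_ne False remove_leaf_apply by (simp add: drop_rank_def)
  qed
qed

lemma ranked_tree_remove_leaf: "ranked_tree (S - {u}) m (remove_leaf p u)"
  unfolding ranked_tree_def
  by (intro conjI ballI allI impI removed_leaf_parent removed_internal_parent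
      removed_card_children removed_outside) auto

end

lemma finite_ranked_trees: "finite S \<Longrightarrow> finite (Collect (ranked_tree S m))"
proof -
  let ?F = "{p. \<forall>x. (x \<in> tree_nodes S m \<longrightarrow> p x \<in> {..m}) \<and> (x \<notin> tree_nodes S m \<longrightarrow> p x = 0)}"
  assume "finite S"
  then have "finite ?F" by (intro finite_set_of_finite_funs finite_tree_nodes) auto
  moreover have "Collect (ranked_tree S m) \<subseteq> ?F"
  proof (intro subsetI CollectI allI conjI impI)
    fix p x assume "p \<in> Collect (ranked_tree S m)"
    then have tree: "ranked_tree S m p" by simp
    show "p x \<in> {..m}" using ranked_tree_le[OF tree] by simp
    show "x \<notin> tree_nodes S m \<Longrightarrow> p x = 0" using ranked_tree_outside[OF tree] by simp
  qed
  ultimately show ?thesis by (rule finite_subset[rotated])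
qed

lemma card_ranked_tree_parent_less:
  assumes tree: "ranked_tree S m r" and m: "1 \<le> m" and j: "1 \<le> j" "j \<le> Suc m"
  shows "card {y \<in> tree_nodes S m. r y < j} = 2 * j - 1"
  using j
proof (induction j rule: dec_induct)
  case base
  have "{y \<in> tree_nodes S m. r y < 1} = {I 1}"
    using ranked_tree_eq_0_iff[OF tree] m by auto
  then show ?case by simp
next
  case (step j)
  have "{y \<in> tree_nodes S m. r y < Suc j}
      = {y \<in> tree_nodes S m. r y < j} \<union> {y \<in> tree_nodes S m. r y = j}"
    by auto
  moreover have "card {y \<in> tree_nodes S m. r y = j} = 2"
    using ranked_tree_card_children[OF tree] step by simp
  moreover have "finite {y \<in> tree_nodes S m. r y < j}" "finite {y \<in> tree_nodes S m. r y = j}"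
    using step calculation(2) by (auto intro: card_ge_0_finite)
  ultimately show ?case using step by (simp add: card_Un_disjoint disjoint_iff)
qed

lemma card_edges_spanning_rank:
  assumes tree: "ranked_tree S m r" and m: "1 \<le> m" and j: "1 \<le> j" "j \<le> Suc m"
  shows "card {y \<in> tree_nodes S m. edge_spans r j y} = j"
proof -
  have eq: "{y \<in> tree_nodes S m. edge_spans r j y} = {y \<in> tree_nodes S m. r y < j} - I ` {1..<j}"
    by (auto simp: edge_spans_def not_le)
  have "I k \<in> {y \<in> tree_nodes S m. r y < j}" if "k \<in> {1..<j}" for k
    using that ranked_tree_internal_less[OF tree, of k] j by simp
  then have "I ` {1..<j} \<subseteq> {y \<in> tree_nodes S m. r y < j}" by blast
  moreover have "card (I ` {1..<j}) = j - 1" by (simp add: card_image inj_on_def)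
  ultimately show ?thesis
    using card_ranked_tree_parent_less[OF assms] by (simp add: eq card_Diff_subset)
qed

lemma insert_leaf_inject:
  assumes "r y < a" "r z < a" "y \<noteq> L u" "insert_leaf r y a u = insert_leaf r z a u"
  shows "y = z"
proof -
  have "insert_leaf r y a u (lift_node a y) = a"
    using assms(1) insert_leaf_eq_iff[of r y a u] by simp
  then have "insert_leaf r z a u (lift_node a y) = a" using assms(4) by simp
  then show ?thesis using assms(2,3) insert_leaf_eq_iff[of r z a u] by simp
qed

lemma insert_leaf_top_rank:
  assumes "ranked_tree S m r"
  shows "insert_leaf r (L v) (Suc m) u x =
    (if x = L u \<or> x = L v then Suc m else if x = I (Suc m) then r (L v) else r x)"
proof -
  have "lift_rank (Suc m) (r (drop_node (Suc m) x)) = r x" if "x \<noteq> I (Suc m)"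
  proof (cases x)
    case (L i)
    then show ?thesis using ranked_tree_le[OF assms, of x] by (simp add: lift_rank_def)
  next
    case (I k)
    then show ?thesis
      using that ranked_tree_le[OF assms] ranked_tree_outside[OF assms, of "I k"]
        ranked_tree_outside[OF assms, of "I (k - 1)"]
      by (auto simp: lift_rank_def drop_rank_def less_Suc_eq_le)
  qed
  then show ?thesis by (simp add: insert_leaf_def)
qed

lemma ranked_trees_with_removed_leaf:
  assumes tree: "ranked_tree S m r" and u: "u \<notin> S" and m: "1 \<le> m" and j: "1 \<le> j" "j \<le> Suc m"
  shows "{p. ranked_tree (insert u S) (Suc m) p \<and> remove_leaf p u = r \<and> p (L u) = j}
       = (\<lambda>y. insert_leaf r y j u) ` {y \<in> tree_nodes S m. edge_spans r j y}"
proof (intro equalityI subsetI)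
  fix p assume "p \<in> {p. ranked_tree (insert u S) (Suc m) p \<and> remove_leaf p u = r \<and> p (L u) = j}"
  then have p: "ranked_tree (insert u S) (Suc m) p" "remove_leaf p u = r" "p (L u) = j" by auto
  let ?y = "drop_node j (sibling p (L u))"
  have "insert u S - {u} = S" using u by auto
  then have "?y \<in> {y \<in> tree_nodes S m. edge_spans r j y}"
    using edge_spans_sibling[OF p(1) m, of u] p(2,3) by simp
  moreover have "p = insert_leaf r ?y j u"
    using insert_remove_leaf[OF p(1) m, of u] p(2,3) by simp
  ultimately show "p \<in> (\<lambda>y. insert_leaf r y j u) ` {y \<in> tree_nodes S m. edge_spans r j y}" by blast
next
  fix p assume "p \<in> (\<lambda>y. insert_leaf r y j u) ` {y \<in> tree_nodes S m. edge_spans r j y}"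
  then obtain y where y: "y \<in> tree_nodes S m" "edge_spans r j y" and p: "p = insert_leaf r y j u"
    by blast
  have "r (L u) = 0" using ranked_tree_outside[OF tree] u by simp
  moreover have "y \<noteq> L u" "r y < j" using y u by (auto simp: edge_spans_def)
  ultimately show "p \<in> {p. ranked_tree (insert u S) (Suc m) p \<and> remove_leaf p u = r \<and> p (L u) = j}"
    using p ranked_tree_insert_leaf[OF tree u j y] remove_insert_leaf[of r y j u]
    by (simp add: insert_leaf_def)
qed

theorem card_ranked_trees_with_removed_leaf:
  assumes tree: "ranked_tree S m r" and u: "u \<notin> S" and m: "1 \<le> m" and j: "1 \<le> j" "j \<le> Suc m"
  shows "card {p. ranked_tree (insert u S) (Suc m) p \<and> remove_leaf p u = r \<and> p (L u) = j} = j"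
proof -
  have "inj_on (\<lambda>y. insert_leaf r y j u) {y \<in> tree_nodes S m. edge_spans r j y}"
  proof (rule inj_onI)
    fix y z
    assume y: "y \<in> {y \<in> tree_nodes S m. edge_spans r j y}"
      and z: "z \<in> {y \<in> tree_nodes S m. edge_spans r j y}"
      and eq: "insert_leaf r y j u = insert_leaf r z j u"
    have "y \<noteq> L u" using y u by auto
    then show "y = z" using insert_leaf_inject[OF _ _ _ eq] y z by (simp add: edge_spans_def)
  qed
  then show ?thesis
    using ranked_trees_with_removed_leaf[OF assms] card_edges_spanning_rank[OF tree m j]
    by (simp add: card_image)
qed

lemma W_two: "W 2 = {\<lambda>x. if x = L 1 \<or> x = L 2 then 1 else 0}"
proof -
  define c :: rtree where "c = (\<lambda>x. if x = L 1 \<or> x = L 2 then 1 else 0)"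
  have "w = c" if "w \<in> W 2" for w
  proof
    fix x
    have tree: "ranked_tree {1..2} 1 w" using that by (simp add: mem_W_iff)
    have "w (L 1) = 1" "w (L 2) = 1"
      using ranked_tree_leaf[OF tree, of 1] ranked_tree_leaf[OF tree, of 2] by auto
    moreover have "w x = 0" if "x \<noteq> L 1" "x \<noteq> L 2"
    proof -
      have "x \<notin> tree_nodes {1..2} 1 - {I 1}" using that by (auto simp: tree_nodes_def)
      then show ?thesis by (rule ranked_tree_outside[OF tree])
    qed
    ultimately show "w x = c x" by (auto simp: c_def)
  qed
  moreover have "ranked_tree {1..2} 1 c"
  proof -
    have "1 \<le> c (L i) \<and> c (L i) \<le> 1" if "i \<in> {1..2}" for i
      using that by (auto simp: c_def)
    moreover have "{x \<in> tree_nodes {1..2} 1. c x = 1} = {L 1, L 2}"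
      by (auto simp: tree_nodes_def c_def)
    moreover have "c x = 0" if "x \<notin> tree_nodes {1..2} 1 - {I 1}" for x
      using that by (auto simp: c_def)
    ultimately show ?thesis by (simp add: ranked_tree_def)
  qed
  then have "c \<in> W 2" by (simp add: mem_W_iff)
  ultimately show ?thesis unfolding c_def by blast
qed

lemma moran_two: "w \<in> W 2 \<Longrightarrow> u \<in> {1..2} \<Longrightarrow> v \<in> {1..2} \<Longrightarrow> u \<noteq> v \<Longrightarrow> moran 2 w u v = w"
  unfolding W_two moran_def Let_def by (rule ext) (auto split: node.split)

lemma mem_W_iff_Suc: "2 \<le> n \<Longrightarrow> p \<in> W n \<longleftrightarrow> ranked_tree {1..n} (Suc (n - 2)) p"
  by (simp add: mem_W_iff Suc_diff_Suc numeral_2_eq_2)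

lemma ranked_tree_remove_leaf_W:
  "3 \<le> n \<Longrightarrow> w \<in> W n \<Longrightarrow> u \<in> {1..n} \<Longrightarrow> ranked_tree ({1..n} - {u}) (n - 2) (remove_leaf w u)"
  by (rule ranked_tree_remove_leaf) (auto simp: mem_W_iff_Suc)

lemma moran_eq_insert_leaf:
  assumes "3 \<le> n" "w \<in> W n" "u \<in> {1..n}" "u \<noteq> v"
  shows "moran n w u v = insert_leaf (remove_leaf w u) (L v) (n - 1) u"
proof
  fix x
  have "n - 1 = Suc (n - 2)" using assms(1) by simp
  then show "moran n w u v x = insert_leaf (remove_leaf w u) (L v) (n - 1) u x"
    using insert_leaf_top_rank[OF ranked_tree_remove_leaf_W[OF assms(1-3)]] moran_eq_remove_leaf[OF assms(4)]
    by simp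
qed

lemma moran_in_W:
  assumes n: "2 \<le> n" and w: "w \<in> W n" and uv: "u \<in> {1..n}" "v \<in> {1..n}" "u \<noteq> v"
  shows "moran n w u v \<in> W n"
proof (cases "n = 2")
  case True
  then show ?thesis using moran_two assms by simp
next
  case False
  let ?r = "remove_leaf w u"
  have tree: "ranked_tree ({1..n} - {u}) (n - 2) ?r"
    using ranked_tree_remove_leaf_W False assms by simp
  have spans: "edge_spans ?r (Suc (n - 2)) (L v)"
    using ranked_tree_le[OF tree, of "L v"] by (simp add: edge_spans_def)
  have u': "u \<notin> {1..n} - {u}" and v': "L v \<in> tree_nodes ({1..n} - {u}) (n - 2)" using uv by auto
  have "ranked_tree (insert u ({1..n} - {u})) (Suc (n - 2)) (insert_leaf ?r (L v) (Suc (n - 2)) u)"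
    by (rule ranked_tree_insert_leaf[OF tree u' _ order_refl v' spans]) simp
  moreover have "insert u {1..n} = {1..n}" "Suc (n - 2) = n - 1" using uv n False by auto
  ultimately show ?thesis
    using moran_eq_insert_leaf[of n w u v] False assms by (simp add: mem_W_iff_Suc)
qed

lemma moran_eq_iff_remove_leaf_eq:
  assumes n: "3 \<le> n" and w: "w \<in> W n" "w' \<in> W n" and uv: "u \<in> {1..n}" "v \<in> {1..n}" "u \<noteq> v"
    and cherry: "w' (L u) = n - 1" "w' (L v) = n - 1"
  shows "moran n w u v = w' \<longleftrightarrow> remove_leaf w u = remove_leaf w' u"
proof
  let ?r = "remove_leaf w u"
  assume "moran n w u v = w'"
  moreover have "?r (L v) < n - 1" "?r (L u) = 0"
    using ranked_tree_le[OF ranked_tree_remove_leaf_W[OF n w(1) uv(1)], of "L v"] n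
      ranked_tree_outside[OF ranked_tree_remove_leaf_W[OF n w(1) uv(1)], of "L u"] by auto
  ultimately show "?r = remove_leaf w' u"
    using moran_eq_insert_leaf[OF n w(1) uv(1,3)] remove_insert_leaf[of ?r "L v" "n - 1" u] uv(3) by simp
next
  assume eq: "remove_leaf w u = remove_leaf w' u"
  have tree': "ranked_tree {1..n} (Suc (n - 2)) w'" "1 \<le> n - 2"
    using w(2) n by (auto simp: mem_W_iff_Suc)
  have "sibling w' (L u) = L v"
    using ranked_tree_sibling(4)[of "{1..n}" "n - 1" w' "L u" "L v"] w(2) uv cherry
      by (simp add: mem_W_iff)
  then have "insert_leaf (remove_leaf w' u) (L v) (n - 1) u = w'"
    using insert_remove_leaf[OF tree' uv(1)] cherry n by (simp add: Suc_diff_Suc numeral_3_eq_3)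
  then show "moran n w u v = w'" using moran_eq_insert_leaf[OF n w(1) uv(1,3)] eq by simp
qed

lemma card_moran_preimages:
  assumes n: "2 \<le> n" and w': "w' \<in> W n" and uv: "u \<in> {1..n}" "v \<in> {1..n}" "u \<noteq> v"
    and cherry: "w' (L u) = n - 1" "w' (L v) = n - 1" and j: "1 \<le> j" "j \<le> n - 1"
  shows "card {w \<in> W n. moran n w u v = w' \<and> w (L u) = j} = j"
proof (cases "n = 2")
  case True
  then have "{w \<in> W n. moran n w u v = w' \<and> w (L u) = j} = {w'}" "j = 1"
    using moran_two[of _ u v] w' uv j by (auto simp: W_two)
  then show ?thesis by simp
next
  case False
  let ?S = "{1..n} - {u}" and ?r = "remove_leaf w' u"
  have n3: "3 \<le> n" using n False by simp
  have "card {p. ranked_tree (insert u ?S) (Suc (n - 2)) p \<and> remove_leaf p u = ?r \<and> p (L u) = j} = j"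
    by (rule card_ranked_trees_with_removed_leaf[OF ranked_tree_remove_leaf_W[OF n3 w' uv(1)]])
      (use n3 j in auto)
  moreover have "insert u ?S = {1..n}" using uv by auto
  moreover have "{w \<in> W n. moran n w u v = w' \<and> w (L u) = j}
      = {p. ranked_tree {1..n} (Suc (n - 2)) p \<and> remove_leaf p u = ?r \<and> p (L u) = j}"
    using moran_eq_iff_remove_leaf_eq[OF n3 _ w' uv cherry] n by (auto simp: mem_W_iff_Suc)
  ultimately show ?thesis by simp
qed

lemma card_top_children_leaves:
  assumes tree: "ranked_tree S m p" and m: "1 \<le> m"
  shows "card {i \<in> S. p (L i) = m} = 2"
proof -
  have "p (I k) \<noteq> m" if "I k \<in> tree_nodes S m" for k
    using that ranked_tree_internal_less[OF tree, of k] by simp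
  then have "{x \<in> tree_nodes S m. p x = m} = L ` {i \<in> S. p (L i) = m}"
    by (auto simp: tree_nodes_def)
  then show ?thesis using ranked_tree_card_children[OF tree m order_refl]
    by (simp add: card_image inj_on_def)
qed

lemma two_mult_choose_two: "2 * (n choose 2) = n * (n - 1)"
proof -
  have "even (n * (n - 1))" by (cases n) auto
  then show ?thesis unfolding choose_two by simp
qed

lemma finite_W: "finite (W n)"
proof -
  have "W n = Collect (ranked_tree {1..n} (n - 1))" by (auto simp: mem_W_iff)
  then show ?thesis using finite_ranked_trees[of "{1..n}" "n - 1"] by simp
qed

lemma finite_moran_pairs: "finite (moran_pairs n)"
  by (rule finite_subset[of _ "{1..n} \<times> {1..n}"]) (auto simp: moran_pairs_def)

lemma sum_card_pairs_swap:
  assumes "finite A" "finite P"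
  shows "(\<Sum>x\<in>A. card {(u, v). (u, v) \<in> P \<and> R x u v}) = (\<Sum>(u, v)\<in>P. card {x \<in> A. R x u v})"
proof -
  have "{(u, v). (u, v) \<in> P \<and> R x u v} = {p. p \<in> P \<and> R x (fst p) (snd p)}" for x by auto
  then show ?thesis
    using sum.swap_restrict[OF assms, of "\<lambda>_ _. 1::nat" "\<lambda>x p. R x (fst p) (snd p)"]
    by (simp add: split_def)
qed

lemma card_pairs_eq_sum:
  assumes "finite P"
  shows "card {(u, v). (u, v) \<in> P \<and> Q u v} = (\<Sum>(u, v)\<in>P. if Q u v then 1 else 0)"
proof -
  have "{(u, v). (u, v) \<in> P \<and> Q u v} = {p \<in> P. Q (fst p) (snd p)}" by auto
  then show ?thesis using sum.inter_filter[OF assms, of "\<lambda>_. 1::nat" "\<lambda>p. Q (fst p) (snd p)"]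
    by (simp add: split_def)
qed

lemma card_moran_pairs_leaf_parent:
  "card {(u, v). (u, v) \<in> moran_pairs n \<and> w (L u) = j} = B n j w * (n - 1)"
proof -
  have "{(u, v). (u, v) \<in> moran_pairs n \<and> w (L u) = j}
      = Sigma {i \<in> {1..n}. w (L i) = j} (\<lambda>u. {1..n} - {u})"
    by (auto simp: moran_pairs_def)
  then show ?thesis by (simp add: B_def)
qed

lemma card_moran_pairs_top_cherry:
  assumes "2 \<le> n" "w \<in> W n"
  shows "card {(u, v). (u, v) \<in> moran_pairs n \<and> w (L u) = n - 1 \<and> w (L v) = n - 1} = 2"
proof -
  have "card {i \<in> {1..n}. w (L i) = n - 1} = 2"
    using card_top_children_leaves[of "{1..n}" "n - 1" w] assms by (simp add: mem_W_iff)
  then obtain a b where ab: "{i \<in> {1..n}. w (L i) = n - 1} = {a, b}" "a \<noteq> b"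
    by (auto simp: card_2_iff)
  then have top: "i \<in> {1..n} \<and> w (L i) = n - 1 \<longleftrightarrow> i = a \<or> i = b" for i by blast
  have "{(u, v). (u, v) \<in> moran_pairs n \<and> w (L u) = n - 1 \<and> w (L v) = n - 1} = {(a, b), (b, a)}"
  proof (intro equalityI subsetI)
    fix p assume "p \<in> {(u, v). (u, v) \<in> moran_pairs n \<and> w (L u) = n - 1 \<and> w (L v) = n - 1}"
    then obtain u v where "p = (u, v)" "u \<noteq> v" "u = a \<or> u = b" "v = a \<or> v = b"
      using top by (auto simp: moran_pairs_def)
    then show "p \<in> {(a, b), (b, a)}" by auto
  next
    fix p assume "p \<in> {(a, b), (b, a)}"
    then show "p \<in> {(u, v). (u, v) \<in> moran_pairs n \<and> w (L u) = n - 1 \<and> w (L v) = n - 1}"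
      using top[of a] top[of b] ab(2) by (auto simp: moran_pairs_def)
  qed
  then show ?thesis using ab(2) by simp
qed

lemma Mor_eq_sum_Mor_j:
  assumes "w \<in> W n"
  shows "Mor n w w' = (\<Sum>i = 1..n-1. Mor_j n i w w')"
proof -
  let ?E = "{(u, v). (u, v) \<in> moran_pairs n \<and> moran n w u v = w'}"
  have "(\<lambda>(u, v). w (L u)) ` ?E \<subseteq> {1..n-1}"
    using ranked_tree_leaf[of "{1..n}" "n - 1" w] assms by (auto simp: mem_W_iff moran_pairs_def)
  moreover have "finite ?E" using finite_moran_pairs by (rule rev_finite_subset) auto
  ultimately have "card ?E = (\<Sum>i = 1..n-1. card {p \<in> ?E. (\<lambda>(u, v). w (L u)) p = i})"
    using sum.group[of ?E "{1..n-1}" "\<lambda>(u, v). w (L u)" "\<lambda>_. 1::nat"] by (simp add: Collect_conj_eq)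
  also have "\<dots> = (\<Sum>i = 1..n-1.
      card {(u, v). (u, v) \<in> moran_pairs n \<and> moran n w u v = w' \<and> w (L u) = i})"
    by (intro sum.cong refl arg_cong[where f = card]) auto
  finally show ?thesis
    unfolding Mor_def Mor_j_def by (simp only: of_nat_sum sum_divide_distrib)
qed

lemma sum_Mor_j_source:
  assumes n: "2 \<le> n" and w: "w \<in> W n"
  shows "(\<Sum>w'\<in>W n. Mor_j n j w w') = real (B n j w) / real n"
proof -
  let ?P = "moran_pairs n"
  have "(\<Sum>w'\<in>W n. card {(u, v). (u, v) \<in> ?P \<and> moran n w u v = w' \<and> w (L u) = j})
      = (\<Sum>(u, v)\<in>?P. card {w' \<in> W n. moran n w u v = w' \<and> w (L u) = j})"
    by (rule sum_card_pairs_swap[OF finite_W finite_moran_pairs])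
  also have "\<dots> = (\<Sum>(u, v)\<in>?P. if w (L u) = j then 1 else 0)"
  proof (intro sum.cong refl, clarify)
    fix u v assume "(u, v) \<in> ?P"
    then have "moran n w u v \<in> W n" using moran_in_W[OF n w] by (simp add: moran_pairs_def)
    then have "{w' \<in> W n. moran n w u v = w' \<and> w (L u) = j}
        = (if w (L u) = j then {moran n w u v} else {})"
      by auto
    then show "card {w' \<in> W n. moran n w u v = w' \<and> w (L u) = j} = (if w (L u) = j then 1 else 0)"
      by simp
  qed
  also have "\<dots> = card {(u, v). (u, v) \<in> ?P \<and> w (L u) = j}"
    by (rule card_pairs_eq_sum[OF finite_moran_pairs, symmetric])
  also have "\<dots> = B n j w * (n - 1)" by (rule card_moran_pairs_leaf_parent)
  finally have count: "(\<Sum>w'\<in>W n. card {(u, v). (u, v) \<in> ?P \<and> moran n w u v = w' \<and> w (L u) = j})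
      = B n j w * (n - 1)" .
  have "real (n - 1) \<noteq> 0" using n by simp
  then show ?thesis
    unfolding Mor_j_def sum_divide_distrib[symmetric] of_nat_sum[symmetric] count by simp
qed

lemma sum_Mor_j_target:
  assumes n: "2 \<le> n" and w': "w' \<in> W n" and j: "1 \<le> j" "j \<le> n - 1"
  shows "(\<Sum>w\<in>W n. Mor_j n j w w') = real j / real (n choose 2)"
proof -
  let ?P = "moran_pairs n"
  let ?top = "\<lambda>u v. w' (L u) = n - 1 \<and> w' (L v) = n - 1"
  have "(\<Sum>w\<in>W n. card {(u, v). (u, v) \<in> ?P \<and> moran n w u v = w' \<and> w (L u) = j})
      = (\<Sum>(u, v)\<in>?P. card {w \<in> W n. moran n w u v = w' \<and> w (L u) = j})"
    by (rule sum_card_pairs_swap[OF finite_W finite_moran_pairs])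
  also have "\<dots> = (\<Sum>(u, v)\<in>?P. j * (if ?top u v then 1 else 0))"
  proof (intro sum.cong refl, clarify)
    fix u v assume uv: "(u, v) \<in> ?P"
    show "card {w \<in> W n. moran n w u v = w' \<and> w (L u) = j} = j * (if ?top u v then 1 else 0)"
    proof (cases "?top u v")
      case True
      then show ?thesis using card_moran_preimages[OF n w'] uv j by (simp add: moran_pairs_def)
    next
      case False
      \<comment> \<open>a Moran event (u, v) makes u and v the children of the top node\<close>
      then have "moran n w u v \<noteq> w'" for w by (auto simp: moran_def Let_def)
      then show ?thesis using False by auto
    qed
  qed
  also have "\<dots> = j * 2"
    using card_pairs_eq_sum[OF finite_moran_pairs, of n ?top] card_moran_pairs_top_cherry[OF n w']
    by (simp add: sum_distrib_left[symmetric] split_def)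
  finally have count: "(\<Sum>w\<in>W n. card {(u, v). (u, v) \<in> ?P \<and> moran n w u v = w' \<and> w (L u) = j})
      = j * 2" .
  have "real (n * (n - 1)) = 2 * real (n choose 2)"
    using two_mult_choose_two[of n] by (metis of_nat_mult of_nat_numeral)
  then show ?thesis
    unfolding Mor_j_def sum_divide_distrib[symmetric] of_nat_sum[symmetric] count by simp
qed

theorem proposition2:
  fixes n j :: nat and w w' :: rtree
  assumes "n \<ge> 2" and "w \<in> W n" and "w' \<in> W n" and "1 \<le> j" and "j \<le> n - 1"
  shows "Mor n w w' = (\<Sum>i = 1..n-1. Mor_j n i w w') \<and>
         (\<Sum>x\<in>W n. Mor_j n j x w') = real j / real (n choose 2) \<and>
         (\<Sum>y\<in>W n. Mor_j n j w y) = real (B n j w) / real n"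
  using Mor_eq_sum_Mor_j[OF assms(2)] sum_Mor_j_target[OF assms(1,3-5)] sum_Mor_j_source[OF assms(1,2)]
  by blast

end
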